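(* Let $\mathbb{K}\in\{\mathbb{R},\mathbb{C}\}$, $\mathbf{R}_U\in\mathbb{K}^{n\times n}$ self-adjoint positive definite, $U:=\mathbb{K}^n$ with $\langle\mathbf{x},\mathbf{y}\rangle_U:=\langle\mathbf{R}_U\mathbf{x},\mathbf{y}\rangle$, norm $\|\cdot\|_U$, and dual norm $\|\mathbf{y}\|_{U'}:=\langle\mathbf{y},\mathbf{R}_U^{-1}\mathbf{y}\rangle^{1/2}$. Fix $\mu$, $\mathbf{A}(\mu)\in\mathbb{K}^{n\times n}$, $\mathbf{b}(\mu)\in\mathbb{K}^n$, $\mathbf{u}(\mu)$ with $\mathbf{A}(\mu)\mathbf{u}(\mu)=\mathbf{b}(\mu)$, a subspace $U_r\subseteq U$ and $\mathbf{\Theta}\in\mathbb{K}^{k\times n}$. Define $\|\mathbf{y}\|_{U_r'}:=\max_{\mathbf{w}\in U_r\setminus\{\mathbf{0}\}}|\langle\mathbf{y},\mathbf{w}\rangle|/\|\mathbf{w}\|_U$ and $\|\mathbf{y}\|_{U_r'}^{\mathbf{\Theta}}:=\max_{\mathbf{x}\in U_r\setminus\{\mathbf{0}\}}|\langle\mathbf{\Theta}\mathbf{R}_U^{-1}\mathbf{y},\mathbf{\Theta}\mathbf{x}\rangle|/\|\mathbf{\Theta}\mathbf{x}\|$; $\alpha_r(\mu):=\min_{\mathbf{x}\in U_r\setminus\{\mathbf{0}\}}\|\mathbf{A}(\mu)\mathbf{x}\|_{U_r'}/\|\mathbf{x}\|_U$, $\beta_r(\mu):=\max_{\mathbf{x}\in(\mathrm{span}\{\mathbf{u}(\mu)\}+U_r)\setminus\{\mathbf{0}\}}\|\mathbf{A}(\mu)\mathbf{x}\|_{U_r'}/\|\mathbf{x}\|_U$,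 $\beta(\mu):=\max_{\mathbf{x}\in U\setminus\{\mathbf{0}\}}\|\mathbf{A}(\mu)\mathbf{x}\|_{U'}/\|\mathbf{x}\|_U$; $\alpha_r^{\mathbf{\Theta}}(\mu)$ and $\beta_r^{\mathbf{\Theta}}(\mu)$ defined as $\alpha_r(\mu),\beta_r(\mu)$ with $\|\cdot\|_{U_r'}$ replaced by $\|\cdot\|_{U_r'}^{\mathbf{\Theta}}$ (denominators still $\|\mathbf{x}\|_U$); and $$a_r(\mu):=\max_{\mathbf{w}\in U_r\setminus\{\mathbf{0}\}}\frac{\|\mathbf{A}(\mu)\mathbf{w}\|_{U'}}{\|\mathbf{A}(\mu)\mathbf{w}\|_{U_r'}}.$$ Let $Y_r(\mu):=U_r+\mathrm{span}\{\mathbf{R}_U^{-1}(\mathbf{b}(\mu)-\mathbf{A}(\mu)\mathbf{x}):\mathbf{x}\in U_r\}$. If for some $\varepsilon\in[0,1)$, $|\langle\mathbf{x},\mathbf{y}\rangle_U-\langle\mathbf{\Theta}\mathbf{x},\mathbf{\Theta}\mathbf{y}\rangle|\le\varepsilon\|\mathbf{x}\|_U\|\mathbf{y}\|_U$ for all $\mathbf{x},\mathbf{y}\in Y_r(\mu)$, then $$\alpha_r^{\mathbf{\Theta}}(\mu)\ge\frac{1}{\sqrt{1+\varepsilon}}(1-\varepsilon a_r(\mu))\alpha_r(\mu),\qquad\beta_r^{\mathbf{\Theta}}(\mu)\le\frac{1}{\sqrt{1-\varepsilon}}(\beta_r(\mu)+\varepsilon\beta(\mu)).$$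
   Context: $\langle\mathbf{x},\mathbf{y}\rangle=\mathbf{x}^{\mathrm{H}}\mathbf{y}$ is the canonical inner product and $\|\cdot\|$ the Euclidean norm. *)

theory Defs
  imports "HOL-Analysis.Analysis"
begin

text \<open>A field K with K = R or K = C: a real normed field equipped with its
  conjugation (identity on R, complex conjugation on C). By Gelfand-Mazur these
  axioms only admit R and C (up to isomorphism); both are instantiated below.\<close>

class has_cj =
  fixes cj :: "'a \<Rightarrow> 'a"

class rc_field = real_normed_field + has_cj +
  assumes cj_add: "cj (x + y) = cj x + cj y"
    and cj_mult: "cj (x * y) = cj x * cj y"
    and cj_cj: "cj (cj x) = x"
    and cj_of_real: "cj (scaleR r 1) = scaleR r 1"
    and cj_mult_self: "cj x * x = scaleR ((norm x)\<^sup>2) 1"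

instantiation real :: has_cj
begin
definition cj_real :: "real \<Rightarrow> real" where "cj_real x = x"
instance ..
end

instance real :: rc_field
proof
  fix x y :: real and r :: real
  show "cj (x + y) = cj x + cj y" "cj (x * y) = cj x * cj y" "cj (cj x) = x"
    "cj (scaleR r 1) = scaleR r (1::real)" by (simp_all add: cj_real_def)
  show "cj x * x = scaleR ((norm x)\<^sup>2) 1"
    by (simp add: cj_real_def power2_eq_square)
qed

instantiation complex :: has_cj
begin
definition cj_complex :: "complex \<Rightarrow> complex" where "cj_complex z = cnj z"
instance ..
end

instance complex :: rc_field
proof
  fix x y :: complex and r :: real
  show "cj (x + y) = cj x + cj y" "cj (x * y) = cj x * cj y" "cj (cj x) = x"
    "cj (scaleR r 1) = scaleR r (1::complex)" by (simp_all add: cj_complex_def)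
  show "cj x * x = scaleR ((norm x)\<^sup>2) 1"
    by (simp only: cj_complex_def scaleR_conv_of_real mult_1_right complex_norm_square mult.commute mult_1_left)
qed

definition inn :: "'a::rc_field ^ 'n \<Rightarrow> 'a ^ 'n \<Rightarrow> 'a" where
  "inn x y = (\<Sum>i\<in>UNIV. cj (x $ i) * y $ i)"

definition self_adjoint :: "'a::rc_field ^ 'n ^ 'n \<Rightarrow> bool" where
  "self_adjoint M \<longleftrightarrow> (\<forall>i j. M $ i $ j = cj (M $ j $ i))"

definition pos_def :: "'a::rc_field ^ 'n ^ 'n \<Rightarrow> bool" where
  "pos_def M \<longleftrightarrow> (\<forall>x. x \<noteq> 0 \<longrightarrow> (\<exists>r>0. inn x (M *v x) = of_real r))"

text \<open><x,y>_U = <R x, y>, and ||x||_U = <x,x>_U^(1/2) (a nonnegative real,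
  written via its modulus).\<close>
definition innU :: "'a::rc_field ^ 'n ^ 'n \<Rightarrow> 'a ^ 'n \<Rightarrow> 'a ^ 'n \<Rightarrow> 'a" where
  "innU R x y = inn (R *v x) y"

definition normU :: "'a::rc_field ^ 'n ^ 'n \<Rightarrow> 'a ^ 'n \<Rightarrow> real" where
  "normU R x = sqrt (norm (innU R x x))"

definition dualU :: "'a::rc_field ^ 'n ^ 'n \<Rightarrow> 'a ^ 'n \<Rightarrow> real" where
  "dualU R y = sqrt (norm (inn y (matrix_inv R *v y)))"

definition dualUr :: "'a::rc_field ^ 'n ^ 'n \<Rightarrow> ('a ^ 'n) set \<Rightarrow> 'a ^ 'n \<Rightarrow> real" where
  "dualUr R Ur y = (SUP w\<in>Ur - {0}. norm (inn y w) / normU R w)"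

definition dualUrT :: "'a::rc_field ^ 'n ^ 'n \<Rightarrow> 'a ^ 'n ^ 'k \<Rightarrow> ('a ^ 'n) set \<Rightarrow> 'a ^ 'n \<Rightarrow> real" where
  "dualUrT R Th Ur y =
     (SUP x\<in>Ur - {0}. norm (inn (Th *v (matrix_inv R *v y)) (Th *v x)) / norm (Th *v x))"

definition msum :: "('a::rc_field ^ 'n) set \<Rightarrow> ('a ^ 'n) set \<Rightarrow> ('a ^ 'n) set" where
  "msum S T = {x + y | x y. x \<in> S \<and> y \<in> T}"

definition alpha_r :: "'a::rc_field ^ 'n ^ 'n \<Rightarrow> 'a ^ 'n ^ 'n \<Rightarrow> ('a ^ 'n) set \<Rightarrow> real" where
  "alpha_r R A Ur = (INF x\<in>Ur - {0}. dualUr R Ur (A *v x) / normU R x)"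

definition beta_r :: "'a::rc_field ^ 'n ^ 'n \<Rightarrow> 'a ^ 'n ^ 'n \<Rightarrow> 'a ^ 'n \<Rightarrow> ('a ^ 'n) set \<Rightarrow> real" where
  "beta_r R A u Ur = (SUP x\<in>msum (vec.span {u}) Ur - {0}. dualUr R Ur (A *v x) / normU R x)"

definition beta_full :: "'a::rc_field ^ 'n ^ 'n \<Rightarrow> 'a ^ 'n ^ 'n \<Rightarrow> real" where
  "beta_full R A = (SUP x\<in>UNIV - {0}. dualU R (A *v x) / normU R x)"

definition alpha_rT :: "'a::rc_field ^ 'n ^ 'n \<Rightarrow> 'a ^ 'n ^ 'k \<Rightarrow> 'a ^ 'n ^ 'n \<Rightarrow> ('a ^ 'n) set \<Rightarrow> real" where
  "alpha_rT R Th A Ur = (INF x\<in>Ur - {0}. dualUrT R Th Ur (A *v x) / normU R x)"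

definition beta_rT :: "'a::rc_field ^ 'n ^ 'n \<Rightarrow> 'a ^ 'n ^ 'k \<Rightarrow> 'a ^ 'n ^ 'n \<Rightarrow> 'a ^ 'n \<Rightarrow> ('a ^ 'n) set \<Rightarrow> real" where
  "beta_rT R Th A u Ur = (SUP x\<in>msum (vec.span {u}) Ur - {0}. dualUrT R Th Ur (A *v x) / normU R x)"

definition a_r :: "'a::rc_field ^ 'n ^ 'n \<Rightarrow> 'a ^ 'n ^ 'n \<Rightarrow> ('a ^ 'n) set \<Rightarrow> real" where
  "a_r R A Ur = (SUP w\<in>Ur - {0}. dualU R (A *v w) / dualUr R Ur (A *v w))"

definition Y_r :: "'a::rc_field ^ 'n ^ 'n \<Rightarrow> 'a ^ 'n ^ 'n \<Rightarrow> 'a ^ 'n \<Rightarrow> ('a ^ 'n) set \<Rightarrow> ('a ^ 'n) set" where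
  "Y_r R A b Ur = msum Ur (vec.span {matrix_inv R *v (b - A *v x) | x. x \<in> Ur})"

end

theory Submission
  imports Defs
begin

text \<open>For w in U_r one has <y, w> = <R_U^-1 y, w>_U, and R_U^-1 A x lies in Y_r for every
  x in span {u} + U_r because A u = b. The \<epsilon>-embedding property on Y_r therefore changes
  |<A x, w>| by at most \<epsilon> ||A x||_U' ||w||_U, and keeps ||\<Theta> w|| between
  sqrt (1 - \<epsilon>) ||w||_U and sqrt (1 + \<epsilon>) ||w||_U. This gives, for y = A x,
  ||y||_U_r' \<le> sqrt (1 + \<epsilon>) ||y||^\<Theta>_U_r' + \<epsilon> ||y||_U' and
  sqrt (1 - \<epsilon>) ||y||^\<Theta>_U_r' \<le> ||y||_U_r' + \<epsilon> ||y||_U'.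
  On U_r moreover ||A x||_U' \<le> a_r ||A x||_U_r'; dividing by ||x||_U and passing to the
  infimum and the supremum gives both inequalities.\<close>

lemma cj_zero [simp]: "cj (0::'a::rc_field) = 0"
proof -
  have "cj (0::'a) = cj 0 + cj 0"
    by (metis add_0 cj_add)
  then show ?thesis by simp
qed

lemma cj_of_real_eq [simp]: "cj (of_real r :: 'a::rc_field) = of_real r"
  by (simp add: of_real_def cj_of_real)

lemma cj_uminus [simp]: "cj (- x :: 'a::rc_field) = - cj x"
proof -
  have "cj (x + - x) = 0" by simp
  then show ?thesis by (simp only: cj_add) (simp add: add_eq_0_iff)
qed

lemma cj_diff [simp]: "cj (x - y :: 'a::rc_field) = cj x - cj y"
  by (metis cj_add cj_uminus diff_conv_add_uminus)

lemma cj_one [simp]: "cj (1::'a::rc_field) = 1"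
  using cj_of_real_eq[of 1] by simp

declare cj_add [simp] cj_mult [simp] cj_cj [simp]

lemma cj_sum: "cj (sum f S :: 'a::rc_field) = (\<Sum>i\<in>S. cj (f i))"
  by (induction S rule: infinite_finite_induct) auto

lemma cj_mult_self_of_real: "cj x * x = (of_real ((norm x)\<^sup>2) :: 'a::rc_field)"
  by (simp add: cj_mult_self of_real_def)

lemma mult_cj_self_of_real: "x * cj x = (of_real ((norm x)\<^sup>2) :: 'a::rc_field)"
  by (metis cj_mult_self_of_real mult.commute)

lemma inn_diff_left: "inn (x - y) z = inn x z - inn y z"
  by (simp add: inn_def left_diff_distrib sum_subtractf)

lemma inn_diff_right: "inn x (y - z) = inn x y - inn x z"
  by (simp add: inn_def right_diff_distrib sum_subtractf)

lemma inn_smult_left: "inn (c *s x) y = cj c * inn x y"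
  by (simp add: inn_def sum_distrib_left mult.assoc)

lemma inn_smult_right: "inn x (c *s y) = c * inn x y"
  by (simp add: inn_def sum_distrib_left mult_ac)

lemma inn_zero_left [simp]: "inn 0 y = 0"
  by (simp add: inn_def)

lemma inn_zero_right [simp]: "inn x 0 = 0"
  by (simp add: inn_def)

lemma inn_commute: "inn y x = cj (inn x y)"
  by (simp add: inn_def cj_sum mult.commute)

lemma inn_self: "inn x x = of_real ((norm x)\<^sup>2)"
proof -
  have "inn x x = of_real (\<Sum>i\<in>UNIV. (norm (x $ i))\<^sup>2)"
    by (simp add: inn_def cj_mult_self_of_real)
  also have "(\<Sum>i\<in>UNIV. (norm (x $ i))\<^sup>2) = (norm x)\<^sup>2"
    by (simp add: norm_vec_def L2_set_def sum_nonneg)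
  finally show ?thesis .
qed

lemma inn_axis_left: "inn (axis i 1) w = w $ i"
proof -
  have "inn (axis i 1) w = (\<Sum>j\<in>UNIV. if j = i then w $ j else 0)"
    unfolding inn_def axis_def by (rule sum.cong) auto
  then show ?thesis by simp
qed

lemma self_adjoint_inn:
  assumes "self_adjoint R"
  shows "inn (R *v x) y = inn x (R *v y)"
proof -
  have R: "R $ j $ i = cj (R $ i $ j)" for i j
    using assms unfolding self_adjoint_def by blast
  have "inn (R *v x) y = (\<Sum>i\<in>UNIV. \<Sum>j\<in>UNIV. cj (R $ i $ j) * cj (x $ j) * y $ i)"
    unfolding inn_def matrix_vector_mult_def
    by (simp only: vec_lambda_beta cj_sum cj_mult sum_distrib_right)
  also have "\<dots> = (\<Sum>j\<in>UNIV. \<Sum>i\<in>UNIV. cj (R $ i $ j) * cj (x $ j) * y $ i)"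
    by (rule sum.swap)
  also have "\<dots> = (\<Sum>j\<in>UNIV. \<Sum>i\<in>UNIV. cj (x $ j) * (R $ j $ i * y $ i))"
    by (simp only: R[symmetric] mult.assoc mult.left_commute)
  also have "\<dots> = inn x (R *v y)"
    unfolding inn_def matrix_vector_mult_def by (simp only: vec_lambda_beta sum_distrib_left)
  finally show ?thesis .
qed

lemma norm_matrix_vector_mult_le:
  "norm (M *v v) \<le> (\<Sum>i\<in>UNIV. \<Sum>j\<in>UNIV. norm (M $ i $ j)) * norm (v::'a::rc_field^'n)"
proof -
  have "norm (M *v v) \<le> (\<Sum>i\<in>UNIV. norm ((M *v v) $ i))"
    unfolding norm_vec_def by (rule L2_set_le_sum) simp
  also have "\<dots> \<le> (\<Sum>i\<in>UNIV. (\<Sum>j\<in>UNIV. norm (M $ i $ j)) * norm v)"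
  proof (rule sum_mono)
    fix i
    have "norm ((M *v v) $ i) \<le> (\<Sum>j\<in>UNIV. norm (M $ i $ j) * norm (v $ j))"
      unfolding matrix_vector_mult_def vec_lambda_beta
      by (rule order_trans[OF norm_sum]) (simp add: norm_mult)
    also have "\<dots> \<le> (\<Sum>j\<in>UNIV. norm (M $ i $ j) * norm v)"
      by (intro sum_mono mult_left_mono) (simp_all add: Finite_Cartesian_Product.norm_nth_le)
    finally show "norm ((M *v v) $ i) \<le> (\<Sum>j\<in>UNIV. norm (M $ i $ j)) * norm v"
      by (simp add: sum_distrib_right)
  qed
  finally show ?thesis by (simp add: sum_distrib_right)
qed

lemma innU_diff_left: "innU R (x - y) z = innU R x z - innU R y z"
  by (simp add: innU_def matrix_vector_mult_diff_distrib inn_diff_left)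

lemma innU_diff_right: "innU R x (y - z) = innU R x y - innU R x z"
  by (simp add: innU_def inn_diff_right)

lemma innU_smult_left: "innU R (c *s x) y = cj c * innU R x y"
  by (simp add: innU_def vector_scalar_commute inn_smult_left)

lemma innU_smult_right: "innU R x (c *s y) = c * innU R x y"
  by (simp add: innU_def inn_smult_right)

lemma normU_zero [simp]: "normU R 0 = 0"
  by (simp add: normU_def innU_def)

lemma normU_nonneg: "0 \<le> normU R x"
  by (simp add: normU_def)

lemma dualU_nonneg: "0 \<le> dualU R y"
  by (simp add: dualU_def)

locale spd_matrix =
  fixes R :: "'a::rc_field^'n^'n"
  assumes self_adjoint: "self_adjoint R"
    and pos_def: "pos_def R"
begin

lemma innU_commute: "innU R y x = cj (innU R x y)"
  unfolding innU_def self_adjoint_inn[OF self_adjoint, of y x] by (rule inn_commute)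

lemma innU_self: "innU R x x = of_real ((normU R x)\<^sup>2)"
proof (cases "x = 0")
  case False
  then obtain r where "r > 0" "inn x (R *v x) = of_real r"
    using pos_def unfolding pos_def_def by blast
  moreover have "innU R x x = cj (inn x (R *v x))"
    unfolding innU_def by (rule inn_commute)
  ultimately show ?thesis by (simp add: normU_def)
qed (simp add: innU_def normU_def)

lemma normU_pos: "x \<noteq> 0 \<Longrightarrow> 0 < normU R x"
proof -
  assume "x \<noteq> 0"
  then obtain r where "r > 0" "inn x (R *v x) = of_real r"
    using pos_def unfolding pos_def_def by blast
  then show ?thesis
    by (simp add: normU_def innU_def inn_commute[of "R *v x"])
qed

lemma innU_cauchy_schwarz: "norm (innU R x y) \<le> normU R x * normU R y"
proof (cases "x = 0")
  case False
  define a where "a = (normU R x)\<^sup>2"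
  define t where "t = innU R x y"
  define z where "z = of_real a *s y - t *s x"
  have "innU R z z = of_real a * (of_real a * innU R y y) - of_real a * (cj t * innU R x y)
      - (t * (of_real a * innU R y x) - t * (cj t * innU R x x))"
    unfolding z_def by (simp only: innU_diff_left innU_diff_right innU_smult_left
        innU_smult_right cj_of_real_eq right_diff_distrib)
  also have "\<dots> = of_real a * (of_real a * of_real ((normU R y)\<^sup>2)) - of_real a * (t * cj t)"
    unfolding innU_self innU_commute[of y x] t_def[symmetric] a_def[symmetric]
    by (simp add: algebra_simps)
  also have "\<dots> = of_real (a * (a * (normU R y)\<^sup>2 - (norm t)\<^sup>2))"
    by (simp only: mult_cj_self_of_real of_real_mult of_real_diff right_diff_distrib)
  finally have "(normU R z)\<^sup>2 = a * (a * (normU R y)\<^sup>2 - (norm t)\<^sup>2)"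
    unfolding innU_self of_real_eq_iff .
  moreover have "a > 0"
    using normU_pos[OF False] by (simp add: a_def)
  ultimately have "0 \<le> a * (normU R y)\<^sup>2 - (norm t)\<^sup>2"
    by (metis zero_le_power2 zero_le_mult_iff not_less)
  then have "(norm t)\<^sup>2 \<le> (normU R x * normU R y)\<^sup>2"
    by (simp add: a_def power_mult_distrib)
  then show ?thesis
    unfolding t_def by (rule power2_le_imp_le) (simp add: normU_nonneg)
qed (simp add: innU_def normU_def)

end

lemma spd_matrix_mat_1: "spd_matrix (mat 1 :: 'a::rc_field^'n^'n)"
proof
  show "self_adjoint (mat 1 :: 'a^'n^'n)"
    by (simp add: self_adjoint_def mat_def)
  show "pos_def (mat 1 :: 'a^'n^'n)"
    unfolding pos_def_def matrix_vector_mul_lid inn_self by (simp del: of_real_power)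
qed

lemma inn_cauchy_schwarz: "norm (inn x y) \<le> norm x * norm (y :: 'a::rc_field^'n)"
proof -
  have "normU (mat 1) v = norm v" for v :: "'a^'n"
    unfolding normU_def innU_def matrix_vector_mul_lid inn_self norm_of_real by simp
  then show ?thesis
    using spd_matrix.innU_cauchy_schwarz[OF spd_matrix_mat_1, of x y] by (simp add: innU_def)
qed

context spd_matrix
begin

lemma matrix_inv_cancel: "R *v (matrix_inv R *v y) = y"
proof -
  have "invertible R"
    unfolding invertible_left_inverse matrix_left_invertible_ker
    using pos_def unfolding pos_def_def by force
  then have "R ** matrix_inv R = mat 1"
    unfolding invertible_def matrix_inv_def by (metis (mono_tags, lifting) someI_ex)
  then show ?thesis
    by (simp add: matrix_vector_mul_assoc)
qed

lemma dualU_eq_normU_matrix_inv: "dualU R y = normU R (matrix_inv R *v y)"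
  by (simp add: dualU_def normU_def innU_def matrix_inv_cancel)

lemma inn_eq_innU_matrix_inv: "inn y w = innU R (matrix_inv R *v y) w"
  by (simp add: innU_def matrix_inv_cancel)

lemma inn_le_dualU_normU: "norm (inn y w) \<le> dualU R y * normU R w"
  unfolding inn_eq_innU_matrix_inv dualU_eq_normU_matrix_inv by (rule innU_cauchy_schwarz)

lemma inn_ratio_le_dualU: "w \<noteq> 0 \<Longrightarrow> norm (inn y w) / normU R w \<le> dualU R y"
  using inn_le_dualU_normU normU_pos by (simp add: pos_divide_le_eq)

lemma normU_le_norm: "normU R v \<le> sqrt (\<Sum>i\<in>UNIV. \<Sum>j\<in>UNIV. norm (R $ i $ j)) * norm v"
proof -
  let ?C = "\<Sum>i\<in>UNIV. \<Sum>j\<in>UNIV. norm (R $ i $ j)"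
  have "norm (innU R v v) \<le> norm (R *v v) * norm v"
    unfolding innU_def by (rule inn_cauchy_schwarz)
  also have "\<dots> \<le> ?C * norm v * norm v"
    by (simp add: norm_matrix_vector_mult_le mult_right_mono)
  finally have "normU R v \<le> sqrt (?C * (norm v)\<^sup>2)"
    unfolding normU_def by (simp add: power2_eq_square mult.assoc)
  then show ?thesis
    by (simp add: real_sqrt_mult)
qed

lemma norm_le_normU: "norm w \<le> (\<Sum>i\<in>UNIV. dualU R (axis i 1)) * normU R w"
proof -
  have "norm w \<le> (\<Sum>i\<in>UNIV. norm (w $ i))"
    unfolding norm_vec_def by (rule L2_set_le_sum) simp
  also have "\<dots> \<le> (\<Sum>i\<in>UNIV. dualU R (axis i 1) * normU R w)"
    by (rule sum_mono) (metis inn_le_dualU_normU inn_axis_left)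
  finally show ?thesis
    by (simp add: sum_distrib_right)
qed

lemma dualU_matrix_vector_mult_le: "\<exists>K\<ge>0. \<forall>x. dualU R (A *v x) \<le> K * normU R x"
proof -
  let ?M = "matrix_inv R ** A"
  define C\<^sub>R where "C\<^sub>R = sqrt (\<Sum>i\<in>UNIV. \<Sum>j\<in>UNIV. norm (R $ i $ j))"
  define C\<^sub>M where "C\<^sub>M = (\<Sum>i\<in>UNIV. \<Sum>j\<in>UNIV. norm (?M $ i $ j))"
  define C where "C = (\<Sum>i\<in>UNIV. dualU R (axis i 1))"
  have nonneg: "0 \<le> C\<^sub>R" "0 \<le> C\<^sub>M" "0 \<le> C"
    unfolding C\<^sub>R_def C\<^sub>M_def C_def by (simp_all add: sum_nonneg dualU_nonneg)
  have "dualU R (A *v x) \<le> (C\<^sub>R * C\<^sub>M * C) * normU R x" for x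
  proof -
    have "dualU R (A *v x) = normU R (?M *v x)"
      by (simp add: dualU_eq_normU_matrix_inv matrix_vector_mul_assoc)
    also have "\<dots> \<le> C\<^sub>R * norm (?M *v x)"
      unfolding C\<^sub>R_def by (rule normU_le_norm)
    also have "\<dots> \<le> C\<^sub>R * (C\<^sub>M * norm x)"
      unfolding C\<^sub>M_def by (rule mult_left_mono[OF norm_matrix_vector_mult_le nonneg(1)])
    also have "\<dots> \<le> C\<^sub>R * (C\<^sub>M * (C * normU R x))"
      unfolding C_def using nonneg by (intro mult_left_mono norm_le_normU) auto
    finally show ?thesis by (simp add: mult_ac)
  qed
  then show ?thesis
    using nonneg by (meson mult_nonneg_nonneg)
qed

text \<open>All suprema in the definitions live in a conditionally complete lattice, so each use
  of \<open>cSUP_upper\<close> below rests on this bound.\<close>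

lemma dualU_ratio_bounded: "\<exists>K. \<forall>x. dualU R (A *v x) / normU R x \<le> K"
proof -
  obtain K where "K \<ge> 0" and K: "\<And>x. dualU R (A *v x) \<le> K * normU R x"
    using dualU_matrix_vector_mult_le by blast
  have "dualU R (A *v x) / normU R x \<le> K" for x
    using K[of x] \<open>K \<ge> 0\<close> normU_pos[of x] by (cases "x = 0") (simp_all add: pos_divide_le_eq)
  then show ?thesis by blast
qed

lemma bdd_above_dualU_ratio: "bdd_above ((\<lambda>x. dualU R (A *v x) / normU R x) ` S)"
  using dualU_ratio_bounded[of A] by (auto intro: bdd_aboveI2)

lemma dualU_ratio_le_beta_full: "x \<noteq> 0 \<Longrightarrow> dualU R (A *v x) / normU R x \<le> beta_full R A"
  unfolding beta_full_def by (rule cSUP_upper[OF _ bdd_above_dualU_ratio]) simp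

end

lemma Ur_subset_Y_r: "Ur \<subseteq> Y_r R A b Ur"
  unfolding Y_r_def msum_def using vec.span_zero by force

lemma subset_msum_span: "Ur \<subseteq> msum (vec.span {u}) Ur"
  unfolding msum_def using vec.span_zero by force

lemma matrix_inv_image_in_Y_r:
  assumes "A *v u = b" and "vec.subspace Ur" and "x \<in> msum (vec.span {u}) Ur"
  shows "matrix_inv R *v (A *v x) \<in> Y_r R A b Ur"
proof -
  define S where "S = {matrix_inv R *v (b - A *v x) | x. x \<in> Ur}"
  have residual: "matrix_inv R *v (b - A *v w) \<in> vec.span S" if "w \<in> Ur" for w
    unfolding S_def by (rule vec.span_base) (use that in blast)
  have "0 \<in> Ur"
    using assms(2) by (rule vec.subspace_0)
  then have b: "matrix_inv R *v b \<in> vec.span S"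
    using residual[of 0] by simp
  obtain c w where x: "x = c *s u + w" and w: "w \<in> Ur"
    using assms(3) unfolding msum_def vec.span_singleton by blast
  have "matrix_inv R *v (A *v x)
      = (c + 1) *s (matrix_inv R *v b) - matrix_inv R *v (b - A *v w)"
    using assms(1) by (simp add: x matrix_vector_right_distrib matrix_vector_mult_diff_distrib
        vector_scalar_commute algebra_simps vector_sadd_rdistrib)
  then have "matrix_inv R *v (A *v x) \<in> vec.span S"
    using b residual[OF w] by (metis vec.span_diff vec.span_scale)
  then show ?thesis
    unfolding Y_r_def S_def[symmetric] msum_def using \<open>0 \<in> Ur\<close> by force
qed

definition eps_embedding :: "'a::rc_field^'n^'n \<Rightarrow> 'a^'n^'k \<Rightarrow> real \<Rightarrow> ('a^'n) set \<Rightarrow> bool" where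
  "eps_embedding R Th eps S \<longleftrightarrow> (\<forall>x\<in>S. \<forall>y\<in>S.
     norm (innU R x y - inn (Th *v x) (Th *v y)) \<le> eps * normU R x * normU R y)"

context spd_matrix
begin

lemma eps_embedding_normU_sq:
  assumes "eps_embedding R Th eps S" and "w \<in> S"
  shows "\<bar>(normU R w)\<^sup>2 - (norm (Th *v w))\<^sup>2\<bar> \<le> eps * (normU R w)\<^sup>2"
proof -
  have "innU R w w - inn (Th *v w) (Th *v w) = of_real ((normU R w)\<^sup>2 - (norm (Th *v w))\<^sup>2)"
    by (simp add: innU_self inn_self)
  then show ?thesis
    using assms unfolding eps_embedding_def by (metis norm_of_real power2_eq_square mult.assoc)
qed

lemma eps_embedding_norm_le:
  assumes "eps_embedding R Th eps S" and "w \<in> S" and "0 \<le> eps"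
  shows "norm (Th *v w) \<le> sqrt (1 + eps) * normU R w"
proof (rule power2_le_imp_le)
  show "(norm (Th *v w))\<^sup>2 \<le> (sqrt (1 + eps) * normU R w)\<^sup>2"
    using eps_embedding_normU_sq[OF assms(1,2)] assms(3)
    by (simp add: power_mult_distrib algebra_simps)
qed (simp add: assms(3) normU_nonneg)

lemma eps_embedding_norm_ge:
  assumes "eps_embedding R Th eps S" and "w \<in> S" and "eps < 1"
  shows "sqrt (1 - eps) * normU R w \<le> norm (Th *v w)"
proof (rule power2_le_imp_le)
  show "(sqrt (1 - eps) * normU R w)\<^sup>2 \<le> (norm (Th *v w))\<^sup>2"
    using eps_embedding_normU_sq[OF assms(1,2)] assms(3)
    by (simp add: power_mult_distrib algebra_simps)
qed simp

lemma eps_embedding_inn_dual: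
  assumes "eps_embedding R Th eps S" and "matrix_inv R *v y \<in> S" and "w \<in> S"
  shows "\<bar>norm (inn y w) - norm (inn (Th *v (matrix_inv R *v y)) (Th *v w))\<bar>
    \<le> eps * dualU R y * normU R w"
proof -
  have "norm (inn y w - inn (Th *v (matrix_inv R *v y)) (Th *v w)) \<le> eps * dualU R y * normU R w"
    using assms unfolding eps_embedding_def inn_eq_innU_matrix_inv[of y w]
      dualU_eq_normU_matrix_inv by blast
  then show ?thesis
    using norm_triangle_ineq3 order_trans by blast
qed

end

locale reduced_space = spd_matrix R for R :: "'a::rc_field^'n^'n" +
  fixes Ur :: "('a^'n) set"
  assumes subspace: "vec.subspace Ur"
    and nontrivial: "Ur \<noteq> {0}"
begin

lemma Ur_minus_0_nonempty: "Ur - {0} \<noteq> {}"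
  using nontrivial vec.subspace_0[OF subspace] by blast

lemma dualUr_upper: "w \<in> Ur - {0} \<Longrightarrow> norm (inn y w) / normU R w \<le> dualUr R Ur y"
  unfolding dualUr_def
  by (rule cSUP_upper) (auto intro: bdd_aboveI2 inn_ratio_le_dualU)

lemma dualUr_least:
  "(\<And>w. w \<in> Ur - {0} \<Longrightarrow> norm (inn y w) / normU R w \<le> c) \<Longrightarrow> dualUr R Ur y \<le> c"
  unfolding dualUr_def by (rule cSUP_least[OF Ur_minus_0_nonempty])

lemma dualUr_le_dualU: "dualUr R Ur y \<le> dualU R y"
  by (rule dualUr_least) (simp add: inn_ratio_le_dualU)

lemma dualUr_nonneg: "0 \<le> dualUr R Ur y"
proof -
  obtain w where "w \<in> Ur - {0}"
    using Ur_minus_0_nonempty by blast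
  then show ?thesis
    by (meson dualUr_upper divide_nonneg_nonneg norm_ge_zero normU_nonneg order_trans)
qed

lemma dualUrT_upper:
  assumes "w \<in> Ur - {0}"
  shows "norm (inn (Th *v (matrix_inv R *v y)) (Th *v w)) / norm (Th *v w) \<le> dualUrT R Th Ur y"
proof -
  have "norm (inn (Th *v (matrix_inv R *v y)) (Th *v v)) / norm (Th *v v)
      \<le> norm (Th *v (matrix_inv R *v y))" for v
    using inn_cauchy_schwarz[of "Th *v (matrix_inv R *v y)" "Th *v v"]
    by (cases "Th *v v = 0") (simp_all add: pos_divide_le_eq)
  then show ?thesis
    unfolding dualUrT_def by (intro cSUP_upper assms bdd_aboveI2)
qed

lemma dualUrT_least:
  "(\<And>w. w \<in> Ur - {0} \<Longrightarrow> norm (inn (Th *v (matrix_inv R *v y)) (Th *v w)) / norm (Th *v w) \<le> c)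
    \<Longrightarrow> dualUrT R Th Ur y \<le> c"
  unfolding dualUrT_def by (rule cSUP_least[OF Ur_minus_0_nonempty])

lemma dualUrT_nonneg: "0 \<le> dualUrT R Th Ur y"
proof -
  obtain w where "w \<in> Ur - {0}"
    using Ur_minus_0_nonempty by blast
  then show ?thesis
    by (meson dualUrT_upper divide_nonneg_nonneg norm_ge_zero order_trans)
qed

lemma alpha_r_le: "x \<in> Ur - {0} \<Longrightarrow> alpha_r R A Ur \<le> dualUr R Ur (A *v x) / normU R x"
  unfolding alpha_r_def
  by (rule cINF_lower) (auto intro: bdd_belowI2[where m = 0] simp: dualUr_nonneg normU_nonneg)

lemma alpha_r_nonneg: "0 \<le> alpha_r R A Ur"
  unfolding alpha_r_def
  by (rule cINF_greatest[OF Ur_minus_0_nonempty]) (simp add: dualUr_nonneg normU_nonneg)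

lemma dualU_le_a_r_dualUr:
  assumes "0 < alpha_r R A Ur" and "w \<in> Ur - {0}"
  shows "dualU R (A *v w) \<le> a_r R A Ur * dualUr R Ur (A *v w)"
proof -
  have alpha_le: "alpha_r R A Ur * normU R v \<le> dualUr R Ur (A *v v)" if "v \<in> Ur - {0}" for v
    using alpha_r_le[OF that] normU_pos[of v] that by (simp add: pos_le_divide_eq)
  have dualUr_pos: "0 < dualUr R Ur (A *v v)" if "v \<in> Ur - {0}" for v
  proof -
    have "0 < alpha_r R A Ur * normU R v"
      using assms(1) normU_pos[of v] that by simp
    then show ?thesis
      using alpha_le[OF that] by linarith
  qed
  obtain K where K: "\<And>v. dualU R (A *v v) / normU R v \<le> K"
    using dualU_ratio_bounded by blast
  have "dualU R (A *v v) / dualUr R Ur (A *v v) \<le> K / alpha_r R A Ur" if "v \<in> Ur - {0}" for v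
  proof -
    have "dualU R (A *v v) / dualUr R Ur (A *v v)
        \<le> dualU R (A *v v) / (alpha_r R A Ur * normU R v)"
      using alpha_le[OF that] dualUr_pos[OF that] assms(1) normU_pos[of v] that
      by (intro divide_left_mono) (simp_all add: dualU_nonneg)
    also have "\<dots> \<le> K / alpha_r R A Ur"
      using K[of v] assms(1) by (simp add: divide_right_mono field_simps)
    finally show ?thesis .
  qed
  then have "dualU R (A *v w) / dualUr R Ur (A *v w) \<le> a_r R A Ur"
    unfolding a_r_def by (intro cSUP_upper assms(2) bdd_aboveI2)
  then show ?thesis
    using dualUr_pos[OF assms(2)] by (simp add: divide_le_eq)
qed

lemma dualUr_ratio_le_beta_r:
  assumes "x \<in> msum (vec.span {u}) Ur - {0}"
  shows "dualUr R Ur (A *v x) / normU R x \<le> beta_r R A u Ur"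
proof -
  obtain K where K: "\<And>v. dualU R (A *v v) / normU R v \<le> K"
    using dualU_ratio_bounded by blast
  have "dualUr R Ur (A *v v) / normU R v \<le> K" for v
    by (rule order_trans[OF divide_right_mono[OF dualUr_le_dualU normU_nonneg] K])
  then show ?thesis
    unfolding beta_r_def by (intro cSUP_upper assms bdd_aboveI2)
qed

lemma dualUr_le_dualUrT:
  assumes emb: "eps_embedding R Th eps S" and "Ur \<subseteq> S" and "matrix_inv R *v y \<in> S"
    and "0 \<le> eps"
  shows "dualUr R Ur y \<le> sqrt (1 + eps) * dualUrT R Th Ur y + eps * dualU R y"
proof (rule dualUr_least)
  fix w assume w: "w \<in> Ur - {0}"
  let ?N = "norm (inn (Th *v (matrix_inv R *v y)) (Th *v w))"
  have "?N \<le> dualUrT R Th Ur y * norm (Th *v w)"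
    using dualUrT_upper[OF w, of Th y] by (cases "Th *v w = 0") (simp_all add: divide_le_eq)
  also have "\<dots> \<le> dualUrT R Th Ur y * (sqrt (1 + eps) * normU R w)"
    using eps_embedding_norm_le[OF emb _ assms(4), of w] w assms(2)
    by (intro mult_left_mono dualUrT_nonneg) auto
  finally have "norm (inn y w) \<le> (sqrt (1 + eps) * dualUrT R Th Ur y + eps * dualU R y) * normU R w"
    using eps_embedding_inn_dual[OF emb assms(3), of w] w assms(2)
    by (auto simp: algebra_simps)
  then show "norm (inn y w) / normU R w \<le> sqrt (1 + eps) * dualUrT R Th Ur y + eps * dualU R y"
    using normU_pos[of w] w by (simp add: pos_divide_le_eq)
qed

lemma dualUrT_le_dualUr:
  assumes emb: "eps_embedding R Th eps S" and "Ur \<subseteq> S" and "matrix_inv R *v y \<in> S"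
    and "eps < 1" and "0 \<le> eps"
  shows "sqrt (1 - eps) * dualUrT R Th Ur y \<le> dualUr R Ur y + eps * dualU R y"
proof -
  have "dualUrT R Th Ur y \<le> (dualUr R Ur y + eps * dualU R y) / sqrt (1 - eps)"
  proof (rule dualUrT_least)
    fix w assume w: "w \<in> Ur - {0}"
    let ?N = "norm (inn (Th *v (matrix_inv R *v y)) (Th *v w))"
    have lower: "sqrt (1 - eps) * normU R w \<le> norm (Th *v w)"
      using eps_embedding_norm_ge[OF emb _ assms(4), of w] w assms(2) by auto
    have pos: "0 < sqrt (1 - eps) * normU R w"
      using normU_pos[of w] w assms(4) by simp
    let ?c = "dualUr R Ur y + eps * dualU R y"
    have "?N \<le> norm (inn y w) + eps * dualU R y * normU R w"
      using eps_embedding_inn_dual[OF emb assms(3), of w] w assms(2) by auto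
    moreover have "norm (inn y w) \<le> dualUr R Ur y * normU R w"
      using dualUr_upper[OF w, of y] normU_pos[of w] w by (simp add: pos_divide_le_eq)
    ultimately have "?N * sqrt (1 - eps) \<le> ?c * normU R w * sqrt (1 - eps)"
      using assms(4) by (intro mult_right_mono) (simp_all add: algebra_simps)
    also have "\<dots> \<le> ?c * norm (Th *v w)"
      using mult_left_mono[OF lower, of ?c] dualUr_nonneg[of y] dualU_nonneg[of R y] assms(5)
      by (simp add: mult_ac)
    moreover have "0 < norm (Th *v w)"
      using lower pos by linarith
    ultimately show "?N / norm (Th *v w) \<le> ?c / sqrt (1 - eps)"
      using assms(4) by (simp add: field_simps)
  qed
  then show ?thesis
    using assms(4) by (simp add: le_divide_eq mult.commute)
qed

lemma alpha_rT_ge: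
  assumes "0 \<le> eps"
    and sketch: "\<And>x. x \<in> Ur \<Longrightarrow>
      dualUr R Ur (A *v x) \<le> sqrt (1 + eps) * dualUrT R Th Ur (A *v x) + eps * dualU R (A *v x)"
  shows "1 / sqrt (1 + eps) * (1 - eps * a_r R A Ur) * alpha_r R A Ur \<le> alpha_rT R Th A Ur"
  unfolding alpha_rT_def
proof (rule cINF_greatest[OF Ur_minus_0_nonempty])
  fix x assume x: "x \<in> Ur - {0}"
  let ?c = "1 - eps * a_r R A Ur"
  have bound: "?c * alpha_r R A Ur \<le> sqrt (1 + eps) * (dualUrT R Th Ur (A *v x) / normU R x)"
  \<comment> \<open>If \<open>alpha_r R A Ur = 0\<close>, \<open>a_r R A Ur\<close> may be the junk value of an unbounded
    supremum, but then the bound is trivial.\<close>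
  proof (cases "?c \<ge> 0 \<and> alpha_r R A Ur > 0")
    case True
    have "eps * dualU R (A *v x) \<le> eps * (a_r R A Ur * dualUr R Ur (A *v x))"
      using dualU_le_a_r_dualUr[of A x] True x assms(1) by (simp add: mult_left_mono)
    then have "?c * dualUr R Ur (A *v x) \<le> sqrt (1 + eps) * dualUrT R Th Ur (A *v x)"
      using sketch[of x] x by (simp add: algebra_simps)
    then have "?c * dualUr R Ur (A *v x) / normU R x
        \<le> sqrt (1 + eps) * (dualUrT R Th Ur (A *v x) / normU R x)"
      using normU_nonneg[of R x] by (simp add: divide_right_mono)
    moreover have "?c * alpha_r R A Ur \<le> ?c * dualUr R Ur (A *v x) / normU R x"
      using True mult_left_mono[OF alpha_r_le[OF x], of ?c A] by simp
    ultimately show ?thesis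
      by linarith
  next
    case False
    then have "?c * alpha_r R A Ur \<le> 0"
      using alpha_r_nonneg[of A] by (auto simp: mult_nonpos_nonneg)
    also have "0 \<le> sqrt (1 + eps) * (dualUrT R Th Ur (A *v x) / normU R x)"
      using assms(1) by (simp add: dualUrT_nonneg normU_nonneg)
    finally show ?thesis .
  qed
  show "1 / sqrt (1 + eps) * ?c * alpha_r R A Ur \<le> dualUrT R Th Ur (A *v x) / normU R x"
    using bound assms(1) by (simp add: field_simps)
qed

lemma beta_rT_le:
  assumes "0 \<le> eps" and "eps < 1"
    and sketch: "\<And>x. x \<in> msum (vec.span {u}) Ur \<Longrightarrow>
      sqrt (1 - eps) * dualUrT R Th Ur (A *v x) \<le> dualUr R Ur (A *v x) + eps * dualU R (A *v x)"
  shows "beta_rT R Th A u Ur \<le> 1 / sqrt (1 - eps) * (beta_r R A u Ur + eps * beta_full R A)"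
  unfolding beta_rT_def
proof (rule cSUP_least)
  show "msum (vec.span {u}) Ur - {0} \<noteq> {}"
    using Ur_minus_0_nonempty subset_msum_span by blast
next
  fix x assume x: "x \<in> msum (vec.span {u}) Ur - {0}"
  have "sqrt (1 - eps) * (dualUrT R Th Ur (A *v x) / normU R x)
      \<le> dualUr R Ur (A *v x) / normU R x + eps * (dualU R (A *v x) / normU R x)"
    using sketch[of x] x normU_pos[of x] by (simp add: field_simps divide_right_mono)
  also have "\<dots> \<le> beta_r R A u Ur + eps * beta_full R A"
    using dualUr_ratio_le_beta_r[OF x] dualU_ratio_le_beta_full[of x A] x assms(1)
    by (intro add_mono mult_left_mono) auto
  finally show "dualUrT R Th Ur (A *v x) / normU R x
      \<le> 1 / sqrt (1 - eps) * (beta_r R A u Ur + eps * beta_full R A)"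
    using assms(2) by (simp add: field_simps)
qed

end

theorem proposition4p2:
  fixes R A :: "'a::rc_field ^ 'n ^ 'n"
    and Th :: "'a ^ 'n ^ 'k"
    and b u :: "'a ^ 'n"
    and Ur :: "('a ^ 'n) set"
    and eps :: real
  assumes "self_adjoint R" and "pos_def R"
    and "A *v u = b"
    and "vec.subspace Ur" and "Ur \<noteq> {0}"
    and "0 \<le> eps" and "eps < 1"
    and "\<forall>x\<in>Y_r R A b Ur. \<forall>y\<in>Y_r R A b Ur.
           norm (innU R x y - inn (Th *v x) (Th *v y)) \<le> eps * normU R x * normU R y"
  shows "alpha_rT R Th A Ur \<ge> 1 / sqrt (1 + eps) * (1 - eps * a_r R A Ur) * alpha_r R A Ur \<and>
         beta_rT R Th A u Ur \<le> 1 / sqrt (1 - eps) * (beta_r R A u Ur + eps * beta_full R A)"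
proof -
  interpret reduced_space R Ur
    using assms(1,2,4,5) by unfold_locales
  have emb: "eps_embedding R Th eps (Y_r R A b Ur)"
    using assms(8) unfolding eps_embedding_def .
  have image: "matrix_inv R *v (A *v x) \<in> Y_r R A b Ur" if "x \<in> msum (vec.span {u}) Ur" for x
    using matrix_inv_image_in_Y_r[OF assms(3,4) that] .
  have "1 / sqrt (1 + eps) * (1 - eps * a_r R A Ur) * alpha_r R A Ur \<le> alpha_rT R Th A Ur"
    using assms(6) dualUr_le_dualUrT[OF emb Ur_subset_Y_r image] subset_msum_span
    by (intro alpha_rT_ge) blast+
  moreover have "beta_rT R Th A u Ur \<le> 1 / sqrt (1 - eps) * (beta_r R A u Ur + eps * beta_full R A)"
    using assms(6,7) dualUrT_le_dualUr[OF emb Ur_subset_Y_r image]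
    by (intro beta_rT_le) blast+
  ultimately show ?thesis by simp
qed

end
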